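(* Let $\alpha: I\to M$ be a unit-speed curve on an oriented surface $M\subset E^3$ with Darboux frame $\{T,V,U\}$ and curvatures $k_g,k_n,\tau_g$. Consider the curve $\gamma$ defined in either of the following two cases: (a) $k_n\equiv0$, $c_4,c_5$ real constants, and $\gamma(s)=\alpha(s)+(c_4-s)T(s)+c_5U(s)$; (b) $k_n$ nowhere zero, $\theta$ an antiderivative of $k_n$, $S$ and $C$ antiderivatives of $\sin\theta$ and $\cos\theta$ respectively, $c_6,c_7$ real constants, $$y_3=c_6\cos\theta+c_7\sin\theta-S\cos\theta+C\sin\theta,\qquad y_1=-\sin\theta\,(S-c_6)-\cos\theta\,(C+c_7),$$ and $\gamma(s)=\alpha(s)+y_1(s)T(s)+y_3(s)U(s)$. In either case assume $\gamma$ is regular. Then $\gamma$ is a general helix if and only if $\alpha$ is a relatively normal-slant helix on $M$.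
   Context: $M$ is an oriented surface in Euclidean 3-space $E^3$ and $\alpha:I\to M$ is a unit-speed curve with arc-length parameter $s$. Its Darboux frame $\{T,V,U\}$ consists of the unit tangent $T=\alpha'$, the unit surface normal $U$ of $M$ along $\alpha$, and $V=U\times T$; it satisfies $T'=k_gV+k_nU$, $V'=-k_gT+\tau_gU$, $U'=-k_nT-\tau_gV$, where $k_g,k_n,\tau_g$ are the geodesic curvature, normal curvature and geodesic torsion. A regular curve is a general helix if its unit tangent makes a constant angle with a fixed direction. $\alpha$ is a relatively normal-slant helix if $\langle V,d\rangle$ is constant for some fixed unit vector $d$. *)

theory Defs
  imports "HOL-Analysis.Analysis"
begin

text \<open>Darboux frame of a unit-speed curve alpha on an oriented surface, over an
open interval I: T = alpha', U = unit surface normal along alpha, V = U x T,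
together with the Darboux structure equations with geodesic curvature kg,
normal curvature kn and geodesic torsion tg (assumed continuous).\<close>

definition darboux_frame ::
  "real set \<Rightarrow> (real \<Rightarrow> real^3) \<Rightarrow> (real \<Rightarrow> real^3) \<Rightarrow> (real \<Rightarrow> real^3) \<Rightarrow> (real \<Rightarrow> real^3)
   \<Rightarrow> (real \<Rightarrow> real) \<Rightarrow> (real \<Rightarrow> real) \<Rightarrow> (real \<Rightarrow> real) \<Rightarrow> bool" where
  "darboux_frame I \<alpha> T V U kg kn tg \<longleftrightarrow>
     continuous_on I kg \<and> continuous_on I kn \<and> continuous_on I tg \<and>
     (\<forall>s\<in>I.
        (\<alpha> has_vector_derivative T s) (at s) \<and>
        norm (T s) = 1 \<and> norm (U s) = 1 \<and> T s \<bullet> U s = 0 \<and>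
        V s = cross3 (U s) (T s) \<and>
        (T has_vector_derivative (kg s *\<^sub>R V s + kn s *\<^sub>R U s)) (at s) \<and>
        (V has_vector_derivative (- kg s *\<^sub>R T s + tg s *\<^sub>R U s)) (at s) \<and>
        (U has_vector_derivative (- kn s *\<^sub>R T s - tg s *\<^sub>R V s)) (at s))"

definition regular_curve :: "real set \<Rightarrow> (real \<Rightarrow> real^3) \<Rightarrow> bool" where
  "regular_curve I \<gamma> \<longleftrightarrow>
     (\<forall>s\<in>I. \<gamma> differentiable (at s) \<and> vector_derivative \<gamma> (at s) \<noteq> 0)"

definition general_helix :: "real set \<Rightarrow> (real \<Rightarrow> real^3) \<Rightarrow> bool" where
  "general_helix I \<gamma> \<longleftrightarrow> regular_curve I \<gamma> \<and>
     (\<exists>d c. norm d = 1 \<and>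
        (\<forall>s\<in>I. (vector_derivative \<gamma> (at s) /\<^sub>R norm (vector_derivative \<gamma> (at s))) \<bullet> d = c))"

definition rel_normal_slant_helix :: "real set \<Rightarrow> (real \<Rightarrow> real^3) \<Rightarrow> bool" where
  "rel_normal_slant_helix I V \<longleftrightarrow>
     (\<exists>d c. norm d = 1 \<and> (\<forall>s\<in>I. V s \<bullet> d = c))"

end

theory Submission
  imports Defs
begin

text \<open>If \<open>\<gamma> = \<alpha> + y\<^sub>1 T + y\<^sub>3 U\<close>, the Darboux equations give
\<open>\<gamma>' = (1 + y\<^sub>1' - y\<^sub>3 k\<^sub>n) T + (y\<^sub>1 k\<^sub>g - y\<^sub>3 \<tau>\<^sub>g) V + (y\<^sub>1 k\<^sub>n + y\<^sub>3') U\<close>.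
In both cases of the theorem the coefficients satisfy \<open>y\<^sub>1' = y\<^sub>3 k\<^sub>n - 1\<close> and
\<open>y\<^sub>3' = - y\<^sub>1 k\<^sub>n\<close>, so \<open>\<gamma>'\<close> is a multiple \<open>f V\<close> of \<open>V\<close>. Regularity makes the continuous
function \<open>f\<close> nowhere zero, hence of constant sign on the interval \<open>I\<close>, and the unit
tangent of \<open>\<gamma>\<close> is \<open>V\<close> or \<open>-V\<close> throughout. Thus \<open>\<gamma>\<close> makes a constant angle with \<open>d\<close>
exactly when \<open>V\<close> does.\<close>

lemma sgn_constant_on_connected:
  fixes f :: "'a::topological_space \<Rightarrow> real"
  assumes "connected S" "continuous_on S f" "\<forall>x\<in>S. f x \<noteq> 0"
  obtains e where "e = 1 \<or> e = -1" "\<forall>x\<in>S. sgn (f x) = e"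
proof (cases "S = {}")
  case False
  have "(\<lambda>x. sgn (f x)) constant_on S"
  proof (rule continuous_finite_range_constant[OF assms(1)])
    show "continuous_on S (\<lambda>x. sgn (f x))"
      using assms(2,3) by (rule continuous_on_sgn)
    show "finite ((\<lambda>x. sgn (f x)) ` S)"
      by (rule finite_subset[of _ "{-1, 0, 1}"]) (auto simp: sgn_real_def)
  qed
  then obtain e where e: "\<forall>x\<in>S. sgn (f x) = e"
    unfolding constant_on_def by blast
  with False assms(3) have "e = 1 \<or> e = -1"
    by (metis all_not_in_conv sgn_real_def)
  with e show thesis using that by blast
qed (use that in auto)

lemma rel_normal_slant_helix_scaleR_cong:
  assumes "e \<noteq> 0" "\<forall>s\<in>I. W s = e *\<^sub>R V s"
  shows "rel_normal_slant_helix I W \<longleftrightarrow> rel_normal_slant_helix I V"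
proof
  assume "rel_normal_slant_helix I W"
  then obtain d c where "norm d = 1" "\<forall>s\<in>I. W s \<bullet> d = c"
    unfolding rel_normal_slant_helix_def by blast
  with assms show "rel_normal_slant_helix I V"
    unfolding rel_normal_slant_helix_def
    by (intro exI[of _ d] exI[of _ "c / e"]) (auto simp: field_simps)
next
  assume "rel_normal_slant_helix I V"
  then obtain d c where "norm d = 1" "\<forall>s\<in>I. V s \<bullet> d = c"
    unfolding rel_normal_slant_helix_def by blast
  with assms show "rel_normal_slant_helix I W"
    unfolding rel_normal_slant_helix_def
    by (intro exI[of _ d] exI[of _ "e * c"]) auto
qed

lemma general_helix_iff_rel_normal_slant_helix_of_derivative:
  fixes \<gamma> V :: "real \<Rightarrow> real^3" and f :: "real \<Rightarrow> real"
  assumes "is_interval I" "continuous_on I f"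
    and der: "\<forall>s\<in>I. (\<gamma> has_vector_derivative f s *\<^sub>R V s) (at s)"
    and unit: "\<forall>s\<in>I. norm (V s) = 1"
    and reg: "regular_curve I \<gamma>"
  shows "general_helix I \<gamma> \<longleftrightarrow> rel_normal_slant_helix I V"
proof -
  have vd: "vector_derivative \<gamma> (at s) = f s *\<^sub>R V s" if "s \<in> I" for s
    using der that vector_derivative_at by blast
  have nonzero: "\<forall>s\<in>I. f s \<noteq> 0"
    using reg vd unfolding regular_curve_def by auto
  then obtain e where e: "e = 1 \<or> e = -1" "\<forall>s\<in>I. sgn (f s) = e"
    using sgn_constant_on_connected is_interval_connected assms(1,2) by metis
  have unit_tangent: "vector_derivative \<gamma> (at s) /\<^sub>R norm (vector_derivative \<gamma> (at s)) = e *\<^sub>R V s"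
    if "s \<in> I" for s
  proof -
    have "inverse \<bar>f s\<bar> * f s = e"
      using e(2) nonzero that by (auto simp: sgn_real_def)
    then show ?thesis
      using vd[OF that] unit that by simp
  qed
  have "general_helix I \<gamma> \<longleftrightarrow>
      rel_normal_slant_helix I (\<lambda>s. vector_derivative \<gamma> (at s) /\<^sub>R norm (vector_derivative \<gamma> (at s)))"
    using reg unfolding general_helix_def rel_normal_slant_helix_def by simp
  also have "\<dots> \<longleftrightarrow> rel_normal_slant_helix I V"
    using e(1) unit_tangent by (intro rel_normal_slant_helix_scaleR_cong[of e]) auto
  finally show ?thesis .
qed

lemma darboux_frame_norm_V:
  assumes "darboux_frame I \<alpha> T V U kg kn tg" "s \<in> I"
  shows "norm (V s) = 1"
proof -
  have "(norm (cross3 (U s) (T s)))\<^sup>2 = (norm (U s))\<^sup>2 * (norm (T s))\<^sup>2 - (U s \<bullet> T s)\<^sup>2"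
    by (rule norm_cross)
  then have "(norm (V s))\<^sup>2 = 1"
    using assms unfolding darboux_frame_def by (simp add: inner_commute)
  then show ?thesis
    using norm_ge_zero[of "V s"] by (simp add: power2_eq_1_iff)
qed

lemma darboux_frame_combination_has_vector_derivative:
  assumes frame: "darboux_frame I \<alpha> T V U kg kn tg" and "s \<in> I"
    and y1: "(y1 has_real_derivative y1') (at s)"
    and y3: "(y3 has_real_derivative y3') (at s)"
  shows "((\<lambda>s. \<alpha> s + y1 s *\<^sub>R T s + y3 s *\<^sub>R U s) has_vector_derivative
      (1 + y1' - y3 s * kn s) *\<^sub>R T s + (y1 s * kg s - y3 s * tg s) *\<^sub>R V s
      + (y1 s * kn s + y3') *\<^sub>R U s) (at s)"
proof -
  have "((\<lambda>s. \<alpha> s + y1 s *\<^sub>R T s + y3 s *\<^sub>R U s) has_vector_derivative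
      T s + (y1 s *\<^sub>R (kg s *\<^sub>R V s + kn s *\<^sub>R U s) + y1' *\<^sub>R T s)
      + (y3 s *\<^sub>R (- kn s *\<^sub>R T s - tg s *\<^sub>R V s) + y3' *\<^sub>R U s)) (at s)"
    using frame \<open>s \<in> I\<close> y1 y3 unfolding darboux_frame_def
    by (intro derivative_eq_intros) auto
  then show ?thesis
    by (simp add: algebra_simps)
qed

lemma darboux_combination_helix_iff_rel_normal_slant_helix:
  assumes I: "is_interval I" "open I"
    and frame: "darboux_frame I \<alpha> T V U kg kn tg"
    and y1: "\<forall>s\<in>I. (y1 has_real_derivative y3 s * kn s - 1) (at s)"
    and y3: "\<forall>s\<in>I. (y3 has_real_derivative - y1 s * kn s) (at s)"
    and \<gamma>: "\<forall>s\<in>I. \<gamma> s = \<alpha> s + y1 s *\<^sub>R T s + y3 s *\<^sub>R U s"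
    and reg: "regular_curve I \<gamma>"
  shows "general_helix I \<gamma> \<longleftrightarrow> rel_normal_slant_helix I V"
proof (rule general_helix_iff_rel_normal_slant_helix_of_derivative[OF I(1)])
  have "continuous_on I y1" "continuous_on I y3"
    using y1 y3 by (auto intro!: continuous_at_imp_continuous_on DERIV_isCont)
  with frame show "continuous_on I (\<lambda>s. y1 s * kg s - y3 s * tg s)"
    unfolding darboux_frame_def by (intro continuous_intros) auto
  show "\<forall>s\<in>I. (\<gamma> has_vector_derivative (y1 s * kg s - y3 s * tg s) *\<^sub>R V s) (at s)"
  proof
    fix s assume "s \<in> I"
    from darboux_frame_combination_has_vector_derivative[OF frame \<open>s \<in> I\<close>]
    have "((\<lambda>s. \<alpha> s + y1 s *\<^sub>R T s + y3 s *\<^sub>R U s) has_vector_derivative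
        (1 + (y3 s * kn s - 1) - y3 s * kn s) *\<^sub>R T s + (y1 s * kg s - y3 s * tg s) *\<^sub>R V s
        + (y1 s * kn s + - y1 s * kn s) *\<^sub>R U s) (at s)"
      using y1 y3 \<open>s \<in> I\<close> by blast
    then have "((\<lambda>s. \<alpha> s + y1 s *\<^sub>R T s + y3 s *\<^sub>R U s) has_vector_derivative
        (y1 s * kg s - y3 s * tg s) *\<^sub>R V s) (at s)"
      by simp
    then show "(\<gamma> has_vector_derivative (y1 s * kg s - y3 s * tg s) *\<^sub>R V s) (at s)"
      using I(2) \<open>s \<in> I\<close> by (rule has_vector_derivative_transform_within_open) (simp add: \<gamma>)
  qed
  show "\<forall>s\<in>I. norm (V s) = 1"
    using frame darboux_frame_norm_V by blast
qed (fact reg)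

text \<open>Variation of constants for that system.\<close>

lemma rotation_coefficients_has_derivative:
  fixes \<theta> S C :: "real \<Rightarrow> real" and c6 c7 :: real
  assumes "(\<theta> has_real_derivative k) (at s)"
    and "(S has_real_derivative sin (\<theta> s)) (at s)"
    and "(C has_real_derivative cos (\<theta> s)) (at s)"
  defines "y1 \<equiv> \<lambda>s. - sin (\<theta> s) * (S s - c6) - cos (\<theta> s) * (C s + c7)"
    and "y3 \<equiv> \<lambda>s. c6 * cos (\<theta> s) + c7 * sin (\<theta> s) - S s * cos (\<theta> s) + C s * sin (\<theta> s)"
  shows "(y1 has_real_derivative y3 s * k - 1) (at s)"
    and "(y3 has_real_derivative - y1 s * k) (at s)"
proof -
  have pythagoras: "sin (\<theta> s) * sin (\<theta> s) + cos (\<theta> s) * cos (\<theta> s) = 1"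
    using sin_cos_squared_add[of "\<theta> s"] by (simp add: power2_eq_square)
  have "(y1 has_real_derivative
      - (cos (\<theta> s) * k) * (S s - c6) - sin (\<theta> s) * sin (\<theta> s)
      - (- (sin (\<theta> s) * k) * (C s + c7) + cos (\<theta> s) * cos (\<theta> s))) (at s)"
    unfolding y1_def using assms(1-3) by (auto intro!: derivative_eq_intros)
  then show "(y1 has_real_derivative y3 s * k - 1) (at s)"
    unfolding y3_def by (rule DERIV_cong) (use pythagoras in \<open>simp add: algebra_simps\<close>)
  have "(y3 has_real_derivative
      c6 * (- (sin (\<theta> s) * k)) + c7 * (cos (\<theta> s) * k)
      - (sin (\<theta> s) * cos (\<theta> s) + S s * (- (sin (\<theta> s) * k)))
      + (cos (\<theta> s) * sin (\<theta> s) + C s * (cos (\<theta> s) * k))) (at s)"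
    unfolding y3_def using assms(1-3) by (auto intro!: derivative_eq_intros)
  then show "(y3 has_real_derivative - y1 s * k) (at s)"
    unfolding y1_def by (rule DERIV_cong) (simp add: algebra_simps)
qed

theorem theorem3p17:
  fixes I :: "real set"
    and \<alpha> T V U \<gamma> :: "real \<Rightarrow> real^3"
    and kg kn tg \<theta> S C :: "real \<Rightarrow> real"
    and c4 c5 c6 c7 :: real
  assumes I: "is_interval I" "open I"
    and frame: "darboux_frame I \<alpha> T V U kg kn tg"
    and cases:
      "((\<forall>s\<in>I. kn s = 0) \<and>
        (\<forall>s\<in>I. \<gamma> s = \<alpha> s + (c4 - s) *\<^sub>R T s + c5 *\<^sub>R U s))
       \<or>
       ((\<forall>s\<in>I. kn s \<noteq> 0) \<and>
        (\<forall>s\<in>I. (\<theta> has_real_derivative kn s) (at s)) \<and>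
        (\<forall>s\<in>I. (S has_real_derivative sin (\<theta> s)) (at s)) \<and>
        (\<forall>s\<in>I. (C has_real_derivative cos (\<theta> s)) (at s)) \<and>
        (\<forall>s\<in>I. \<gamma> s = \<alpha> s
            + (- sin (\<theta> s) * (S s - c6) - cos (\<theta> s) * (C s + c7)) *\<^sub>R T s
            + (c6 * cos (\<theta> s) + c7 * sin (\<theta> s) - S s * cos (\<theta> s) + C s * sin (\<theta> s)) *\<^sub>R U s))"
    and reg: "regular_curve I \<gamma>"
  shows "general_helix I \<gamma> \<longleftrightarrow> rel_normal_slant_helix I V"
  using cases
proof
  assume a: "(\<forall>s\<in>I. kn s = 0) \<and> (\<forall>s\<in>I. \<gamma> s = \<alpha> s + (c4 - s) *\<^sub>R T s + c5 *\<^sub>R U s)"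
  show ?thesis
    using a by (intro darboux_combination_helix_iff_rel_normal_slant_helix[OF I frame _ _ _ reg,
        of "\<lambda>s. c4 - s" "\<lambda>_. c5"]) (auto intro!: derivative_eq_intros)
next
  assume b: "(\<forall>s\<in>I. kn s \<noteq> 0) \<and>
      (\<forall>s\<in>I. (\<theta> has_real_derivative kn s) (at s)) \<and>
      (\<forall>s\<in>I. (S has_real_derivative sin (\<theta> s)) (at s)) \<and>
      (\<forall>s\<in>I. (C has_real_derivative cos (\<theta> s)) (at s)) \<and>
      (\<forall>s\<in>I. \<gamma> s = \<alpha> s
          + (- sin (\<theta> s) * (S s - c6) - cos (\<theta> s) * (C s + c7)) *\<^sub>R T s
          + (c6 * cos (\<theta> s) + c7 * sin (\<theta> s) - S s * cos (\<theta> s) + C s * sin (\<theta> s)) *\<^sub>R U s)"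
  define y1 where "y1 = (\<lambda>s. - sin (\<theta> s) * (S s - c6) - cos (\<theta> s) * (C s + c7))"
  define y3 where "y3 = (\<lambda>s. c6 * cos (\<theta> s) + c7 * sin (\<theta> s) - S s * cos (\<theta> s) + C s * sin (\<theta> s))"
  have y1: "\<forall>s\<in>I. (y1 has_real_derivative y3 s * kn s - 1) (at s)"
    and y3: "\<forall>s\<in>I. (y3 has_real_derivative - y1 s * kn s) (at s)"
    using b rotation_coefficients_has_derivative[of \<theta>] unfolding y1_def y3_def by blast+
  have "\<forall>s\<in>I. \<gamma> s = \<alpha> s + y1 s *\<^sub>R T s + y3 s *\<^sub>R U s"
    using b unfolding y1_def y3_def by blast
  with y1 y3 show ?thesis
    by (rule darboux_combination_helix_iff_rel_normal_slant_helix[OF I frame _ _ _ reg])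
qed

end
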